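(* In the setting described in the context, if $\omega\in\mathbb{R}$ is an energy eigenvalue, then $$\omega=-\frac{ka+eQ\rho}{a^2+\rho^2}.$$
   Context: Fix real numbers $M>0$, $a$, $Q$ with $M^2=a^2+Q^2$ (extreme Kerr–Newman black hole of mass $M$, Kerr parameter $a$, charge $Q$) and put $\rho:=M$. Fix the rest mass $m>0$ and charge $e\in\mathbb{R}$ of a Dirac particle and a half-integer $k\in\{\pm\frac12,\pm\frac32,\dots\}$ (azimuthal quantum number). For $\omega,\lambda\in\mathbb{R}$ consider the radial system for $f=(f_1,f_2):(\rho,\infty)\to\mathbb{C}^2$, $$\begin{pmatrix}(r-\rho)\frac{d}{dr}+\frac{iV(r)}{r-\rho} & imr-\lambda\\ -imr-\lambda & (r-\rho)\frac{d}{dr}-\frac{iV(r)}{r-\rho}\end{pmatrix}f(r)=0,\qquad V(r):=\omega(r^2+a^2)+ka+eQr,$$ and the angular system for $g=(g_1,g_2):(0,\pi)\to\mathbb{C}^2$, $$\begin{pmatrix}\frac{d}{d\theta}+\frac{\cot\theta}{2}-W(\theta) & -am\cos\theta+\lambda\\ am\cos\theta+\lambda & -\frac{d}{d\theta}-\frac{\cot\theta}{2}-W(\theta)\end{pmatrix}g(\theta)=0,\qquad W(\theta):=a\omega\sin\theta+\frac{k}{\sin\theta}.$$ A number $\omega\in\mathbb{R}$ is called an energy eigenvalue (of the Dirac equation, for azimuthal quantum number $k$) if there exist $\lambda\in\mathbb{R}$ and nontrivial solutions $f$ of the radial system and $g$ of the angular system with $$\int_\rho^\infty|f(r)|^2\frac{r^2+a^2}{(r-\rho)^2}\,dr<\infty,\qquad\int_0^\pi|g(\theta)|^2\sin\theta\,d\theta<\infty.$$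 *)

theory Defs
  imports "HOL-Analysis.Analysis"
begin

definition half_integer :: "real \<Rightarrow> bool" where
  "half_integer k \<longleftrightarrow> (\<exists>j::int. k = real_of_int j + 1/2)"

definition radV :: "real \<Rightarrow> real \<Rightarrow> real \<Rightarrow> real \<Rightarrow> real \<Rightarrow> real \<Rightarrow> real" where
  "radV a Q e k \<omega> r = \<omega> * (r^2 + a^2) + k * a + e * Q * r"

definition angW :: "real \<Rightarrow> real \<Rightarrow> real \<Rightarrow> real \<Rightarrow> real" where
  "angW a k \<omega> \<theta> = a * \<omega> * sin \<theta> + k / sin \<theta>"

definition radial_solution ::
  "real \<Rightarrow> real \<Rightarrow> real \<Rightarrow> real \<Rightarrow> real \<Rightarrow> real \<Rightarrow> real \<Rightarrow> real \<Rightarrow>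
   (real \<Rightarrow> complex) \<Rightarrow> (real \<Rightarrow> complex) \<Rightarrow> bool" where
  "radial_solution \<rho> a Q m e k \<omega> lam f1 f2 \<longleftrightarrow>
     (\<forall>r>\<rho>. \<exists>d1 d2.
        (f1 has_vector_derivative d1) (at r) \<and> (f2 has_vector_derivative d2) (at r) \<and>
        complex_of_real (r - \<rho>) * d1
          + \<i> * complex_of_real (radV a Q e k \<omega> r / (r - \<rho>)) * f1 r
          + (\<i> * complex_of_real (m * r) - complex_of_real lam) * f2 r = 0 \<and>
        (- \<i> * complex_of_real (m * r) - complex_of_real lam) * f1 r
          + complex_of_real (r - \<rho>) * d2
          - \<i> * complex_of_real (radV a Q e k \<omega> r / (r - \<rho>)) * f2 r = 0)"

definition angular_solution ::
  "real \<Rightarrow> real \<Rightarrow> real \<Rightarrow> real \<Rightarrow> real \<Rightarrow>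
   (real \<Rightarrow> complex) \<Rightarrow> (real \<Rightarrow> complex) \<Rightarrow> bool" where
  "angular_solution a m k \<omega> lam g1 g2 \<longleftrightarrow>
     (\<forall>\<theta>\<in>{0<..<pi}. \<exists>d1 d2.
        (g1 has_vector_derivative d1) (at \<theta>) \<and> (g2 has_vector_derivative d2) (at \<theta>) \<and>
        d1 + complex_of_real (cot \<theta> / 2) * g1 \<theta> - complex_of_real (angW a k \<omega> \<theta>) * g1 \<theta>
          + complex_of_real (- a * m * cos \<theta> + lam) * g2 \<theta> = 0 \<and>
        complex_of_real (a * m * cos \<theta> + lam) * g1 \<theta>
          - d2 - complex_of_real (cot \<theta> / 2) * g2 \<theta> - complex_of_real (angW a k \<omega> \<theta>) * g2 \<theta> = 0)"

definition energy_eigenvalue ::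
  "real \<Rightarrow> real \<Rightarrow> real \<Rightarrow> real \<Rightarrow> real \<Rightarrow> real \<Rightarrow> real \<Rightarrow> bool" where
  "energy_eigenvalue \<rho> a Q m e k \<omega> \<longleftrightarrow>
     (\<exists>lam::real. \<exists>f1 f2 g1 g2.
        radial_solution \<rho> a Q m e k \<omega> lam f1 f2 \<and>
        (\<exists>r>\<rho>. f1 r \<noteq> 0 \<or> f2 r \<noteq> 0) \<and>
        angular_solution a m k \<omega> lam g1 g2 \<and>
        (\<exists>\<theta>\<in>{0<..<pi}. g1 \<theta> \<noteq> 0 \<or> g2 \<theta> \<noteq> 0) \<and>
        set_integrable lborel {\<rho><..}
          (\<lambda>r. ((cmod (f1 r))^2 + (cmod (f2 r))^2) * (r^2 + a^2) / (r - \<rho>)^2) \<and>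
        set_integrable lborel {0<..<pi}
          (\<lambda>\<theta>. ((cmod (g1 \<theta>))^2 + (cmod (g2 \<theta>))^2) * sin \<theta>))"

end

theory Submission
  imports Defs
begin

(* Only the radial system and the integrability of f enter; the extremality condition,
   the sign of m, the value of k and the angular system play no role.
   Write u = |f1|^2 + |f2|^2, z = cnj f1 * f2, mu = lam - i m r and alpha = V / (r - rho).
   The radial system reads (r - rho) f' = [[-i alpha, mu], [cnj mu, i alpha]] f, whence
   (r - rho) u' = 4 Re (mu z) and (r - rho) z' = 2 i alpha z + cnj mu u.
   Suppose V rho \<noteq> 0, so that alpha blows up at the horizon. The singular term cancels in
   the energy E = u + weight * Re (i mu z) with weight = 2 (r - rho) / V, whose derivative
   weight' * Re (i mu z) + weight * m * Re z is bounded by a multiple of u near rho.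
   As weight vanishes at rho, E is comparable to u there, and Gronwall's inequality,
   integrated towards the horizon, keeps u bounded away from 0 (that u is positive near rho
   follows from u r0 > 0 in the same way). Then u (r^2 + a^2) / (r - rho)^2 is not
   integrable at rho. Hence V rho = 0, which is the claimed formula for omega. *)

lemma gronwall_backward:
  fixes E E' :: "real \<Rightarrow> real"
  assumes "\<alpha> \<le> \<beta>"
    and deriv: "\<And>s. s \<in> {\<alpha>..\<beta>} \<Longrightarrow> (E has_real_derivative E' s) (at s)"
    and growth: "\<And>s. s \<in> {\<alpha>..\<beta>} \<Longrightarrow> E' s \<le> K * E s"
  shows "E \<beta> * exp (- K * (\<beta> - \<alpha>)) \<le> E \<alpha>"
proof -
  define h where "h s = E s * exp (- K * s)" for s
  have "h \<beta> \<le> h \<alpha>"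
  proof (rule DERIV_nonpos_imp_nonincreasing[OF \<open>\<alpha> \<le> \<beta>\<close>])
    fix s assume s: "\<alpha> \<le> s" "s \<le> \<beta>"
    have "(h has_real_derivative (E' s - K * E s) * exp (- K * s)) (at s)"
      unfolding h_def using deriv s
      by (auto intro!: derivative_eq_intros simp: algebra_simps)
    moreover have "(E' s - K * E s) * exp (- K * s) \<le> 0"
      using growth s by (simp add: mult_nonpos_nonneg)
    ultimately show "\<exists>y. (h has_real_derivative y) (at s) \<and> y \<le> 0" by blast
  qed
  then have "E \<beta> * exp (- K * \<beta>) * exp (K * \<alpha>) \<le> E \<alpha> * exp (- K * \<alpha>) * exp (K * \<alpha>)"
    unfolding h_def by (simp add: mult_right_mono)
  then show ?thesis
    by (simp add: mult.assoc exp_add[symmetric] algebra_simps)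
qed

lemma norm_cnj_mult_le: "2 * cmod (cnj z * w) \<le> (cmod z)\<^sup>2 + (cmod w)\<^sup>2"
  using sum_squares_bound[of "cmod z" "cmod w"] by (simp add: norm_mult)

lemma not_set_integrable_inverse_square:
  fixes g :: "real \<Rightarrow> real"
  assumes "0 < c" "\<rho> < r1" and bound: "\<And>x. \<rho> < x \<Longrightarrow> x \<le> r1 \<Longrightarrow> c / (x - \<rho>)\<^sup>2 \<le> g x"
  shows "\<not> set_integrable lborel {\<rho><..} g"
proof
  assume "set_integrable lborel {\<rho><..} g"
  then have "(\<integral>\<^sup>+x. ennreal (norm (indicator {\<rho><..} x *\<^sub>R g x)) \<partial>lborel) < \<infinity>"
    unfolding set_integrable_def integrable_iff_bounded by blast
  then obtain B where B: "(\<integral>\<^sup>+x. ennreal (norm (indicator {\<rho><..} x *\<^sub>R g x)) \<partial>lborel) = ennreal B"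
    and "0 \<le> B"
    by (cases "(\<integral>\<^sup>+x. ennreal (norm (indicator {\<rho><..} x *\<^sub>R g x)) \<partial>lborel)") auto
  have tail: "c / \<epsilon> - c / (r1 - \<rho>) \<le> B" if "0 < \<epsilon>" "\<epsilon> < r1 - \<rho>" for \<epsilon>
  proof -
    have "ennreal (c / \<epsilon> - c / (r1 - \<rho>))
        = (\<integral>\<^sup>+x. ennreal (c / (x - \<rho>)\<^sup>2) * indicator {\<rho> + \<epsilon>..r1} x \<partial>lborel)"
    proof (subst nn_integral_FTC_Icc[where F = "\<lambda>x. - c / (x - \<rho>)"])
      fix x assume "x \<in> {\<rho> + \<epsilon>..r1}"
      with \<open>0 < \<epsilon>\<close> have "x - \<rho> \<noteq> 0" by auto
      then show "((\<lambda>x. - c / (x - \<rho>)) has_real_derivative c / (x - \<rho>)\<^sup>2) (at x)"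
        by (auto intro!: derivative_eq_intros simp: power2_eq_square)
    qed (use that \<open>0 < c\<close> in auto)
    also have "\<dots> \<le> (\<integral>\<^sup>+x. ennreal (norm (indicator {\<rho><..} x *\<^sub>R g x)) \<partial>lborel)"
    proof (intro nn_integral_mono)
      fix x
      show "ennreal (c / (x - \<rho>)\<^sup>2) * indicator {\<rho> + \<epsilon>..r1} x
          \<le> ennreal (norm (indicator {\<rho><..} x *\<^sub>R g x))"
        using bound[of x] that by (auto simp: indicator_def intro!: ennreal_leI)
    qed
    finally show ?thesis
      unfolding B using \<open>0 \<le> B\<close> by simp
  qed
  define D where "D = B + c / (r1 - \<rho>) + 1"
  have "c / (r1 - \<rho>) < D"
    unfolding D_def using \<open>0 \<le> B\<close> by simp
  moreover have "0 < c / (r1 - \<rho>)"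
    using assms by simp
  ultimately have "0 < D"
    by linarith
  moreover have "c < (r1 - \<rho>) * D"
    using \<open>c / (r1 - \<rho>) < D\<close> \<open>\<rho> < r1\<close> by (simp add: pos_divide_less_eq mult.commute)
  ultimately have "0 < c / D" "c / D < r1 - \<rho>" "c / (c / D) = D"
    using \<open>0 < c\<close> by (auto simp: field_simps)
  with tail[of "c / D"] show False
    unfolding D_def by simp
qed

locale radial_system =
  fixes \<rho> a Q m e k \<omega> lam :: real and f1 f2 :: "real \<Rightarrow> complex"
  assumes solves: "radial_solution \<rho> a Q m e k \<omega> lam f1 f2"
begin

abbreviation V :: "real \<Rightarrow> real" where "V \<equiv> radV a Q e k \<omega>"

definition mu :: "real \<Rightarrow> complex" where
  "mu r = lam - \<i> * (m * r)"

definition alpha :: "real \<Rightarrow> real" where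
  "alpha r = V r / (r - \<rho>)"

definition density :: "real \<Rightarrow> real" where
  "density r = (cmod (f1 r))\<^sup>2 + (cmod (f2 r))\<^sup>2"

definition cross :: "real \<Rightarrow> complex" where
  "cross r = cnj (f1 r) * f2 r"

lemma mu_deriv: "(mu has_vector_derivative - \<i> * m) (at r)"
  unfolding mu_def[abs_def] by (auto intro!: derivative_eq_intros)

lemma radial_derivatives:
  assumes "\<rho> < r"
  shows "(f1 has_vector_derivative (mu r * f2 r - \<i> * alpha r * f1 r) / (r - \<rho>)) (at r)"
    and "(f2 has_vector_derivative (cnj (mu r) * f1 r + \<i> * alpha r * f2 r) / (r - \<rho>)) (at r)"
proof -
  obtain d1 d2 where d: "(f1 has_vector_derivative d1) (at r)" "(f2 has_vector_derivative d2) (at r)"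
    and eq1: "complex_of_real (r - \<rho>) * d1 + \<i> * complex_of_real (alpha r) * f1 r
          + (\<i> * complex_of_real (m * r) - complex_of_real lam) * f2 r = 0"
    and eq2: "(- \<i> * complex_of_real (m * r) - complex_of_real lam) * f1 r
          + complex_of_real (r - \<rho>) * d2 - \<i> * complex_of_real (alpha r) * f2 r = 0"
    using solves assms unfolding radial_solution_def alpha_def by blast
  have "complex_of_real (r - \<rho>) \<noteq> 0"
    using assms by simp
  then have "d1 = (mu r * f2 r - \<i> * alpha r * f1 r) / (r - \<rho>)"
    and "d2 = (cnj (mu r) * f1 r + \<i> * alpha r * f2 r) / (r - \<rho>)"
    using eq1 eq2 by (auto simp: mu_def field_simps complex_eq_iff)
  with d show "(f1 has_vector_derivative (mu r * f2 r - \<i> * alpha r * f1 r) / (r - \<rho>)) (at r)"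
    and "(f2 has_vector_derivative (cnj (mu r) * f1 r + \<i> * alpha r * f2 r) / (r - \<rho>)) (at r)"
    by simp_all
qed

lemma of_real_density: "complex_of_real (density r) = f1 r * cnj (f1 r) + f2 r * cnj (f2 r)"
  unfolding density_def of_real_add complex_norm_square ..

lemma density_eq_Re: "density r = Re (f1 r * cnj (f1 r) + f2 r * cnj (f2 r))"
  by (simp flip: of_real_density)

lemma density_deriv:
  assumes "\<rho> < r"
  shows "(density has_real_derivative 4 * Re (mu r * cross r) / (r - \<rho>)) (at r)"
proof -
  let ?d1 = "(mu r * f2 r - \<i> * alpha r * f1 r) / (r - \<rho>)"
  let ?d2 = "(cnj (mu r) * f1 r + \<i> * alpha r * f2 r) / (r - \<rho>)"
  have "((\<lambda>s. f1 s * cnj (f1 s) + f2 s * cnj (f2 s)) has_vector_derivative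
      f1 r * cnj ?d1 + ?d1 * cnj (f1 r) + (f2 r * cnj ?d2 + ?d2 * cnj (f2 r))) (at r)"
    using radial_derivatives[OF assms] by (auto intro!: derivative_eq_intros)
  moreover have "Re (f1 r * cnj ?d1 + ?d1 * cnj (f1 r) + (f2 r * cnj ?d2 + ?d2 * cnj (f2 r)))
      = 4 * Re (mu r * cross r) / (r - \<rho>)"
    by (simp add: cross_def algebra_simps add_divide_distrib[symmetric])
  ultimately show ?thesis
    unfolding density_eq_Re[abs_def] by (auto dest: has_field_derivative_Re)
qed

lemma cross_deriv:
  assumes "\<rho> < r"
  shows "(cross has_vector_derivative
      (2 * \<i> * alpha r * cross r + cnj (mu r) * density r) / (r - \<rho>)) (at r)"
proof -
  let ?d1 = "(mu r * f2 r - \<i> * alpha r * f1 r) / (r - \<rho>)"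
  let ?d2 = "(cnj (mu r) * f1 r + \<i> * alpha r * f2 r) / (r - \<rho>)"
  have "(cross has_vector_derivative cnj (f1 r) * ?d2 + cnj ?d1 * f2 r) (at r)"
    unfolding cross_def[abs_def] using radial_derivatives[OF assms]
    by (auto intro!: derivative_eq_intros)
  moreover have "cnj (f1 r) * ?d2 + cnj ?d1 * f2 r
      = (2 * \<i> * alpha r * cross r + cnj (mu r) * density r) / (r - \<rho>)"
    by (simp add: cross_def of_real_density add_divide_distrib[symmetric] algebra_simps)
  ultimately show ?thesis by simp
qed

lemma density_nonneg: "0 \<le> density r"
  by (simp add: density_def)

lemma norm_cross_le: "2 * cmod (cross r) \<le> density r"
  unfolding cross_def density_def by (rule norm_cnj_mult_le)

lemma norm_mu_le: "cmod (mu r) \<le> \<bar>lam\<bar> + \<bar>m\<bar> * \<bar>r\<bar>"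
  using norm_triangle_ineq4[of "complex_of_real lam" "\<i> * (m * r)"]
  by (simp add: mu_def norm_mult abs_mult)

lemma density_pos_left:
  assumes "\<rho> < r" "r \<le> r0" "0 < density r0"
  shows "0 < density r"
proof -
  define K where "K = 2 * (\<bar>lam\<bar> + \<bar>m\<bar> * (\<bar>r\<bar> + \<bar>r0\<bar>)) / (r - \<rho>)"
  have "density r0 * exp (- K * (r0 - r)) \<le> density r"
  proof (rule gronwall_backward[OF \<open>r \<le> r0\<close>])
    fix s assume s: "s \<in> {r..r0}"
    with assms have "\<rho> < s" by simp
    then show "(density has_real_derivative 4 * Re (mu s * cross s) / (s - \<rho>)) (at s)"
      by (rule density_deriv)
    have "4 * Re (mu s * cross s) \<le> 2 * cmod (mu s) * (2 * cmod (cross s))"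
      using complex_Re_le_cmod[of "mu s * cross s"] by (simp add: norm_mult)
    also have "\<dots> \<le> 2 * (\<bar>lam\<bar> + \<bar>m\<bar> * (\<bar>r\<bar> + \<bar>r0\<bar>)) * density s"
    proof (intro mult_mono mult_left_mono norm_cross_le)
      have "\<bar>s\<bar> \<le> \<bar>r\<bar> + \<bar>r0\<bar>"
        using s by auto
      show "cmod (mu s) \<le> \<bar>lam\<bar> + \<bar>m\<bar> * (\<bar>r\<bar> + \<bar>r0\<bar>)"
        using norm_mu_le[of s] mult_left_mono[OF \<open>\<bar>s\<bar> \<le> \<bar>r\<bar> + \<bar>r0\<bar>\<close> abs_ge_zero, of m] by linarith
    qed auto
    finally have "4 * Re (mu s * cross s) / (s - \<rho>)
        \<le> 2 * (\<bar>lam\<bar> + \<bar>m\<bar> * (\<bar>r\<bar> + \<bar>r0\<bar>)) * density s / (s - \<rho>)"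
      using \<open>\<rho> < s\<close> by (simp add: divide_right_mono)
    also have "\<dots> \<le> 2 * (\<bar>lam\<bar> + \<bar>m\<bar> * (\<bar>r\<bar> + \<bar>r0\<bar>)) * density s / (r - \<rho>)"
      using s assms by (intro divide_left_mono) (auto simp: density_nonneg)
    also have "\<dots> = K * density s"
      by (simp add: K_def)
    finally show "4 * Re (mu s * cross s) / (s - \<rho>) \<le> K * density s" .
  qed
  moreover have "0 < density r0 * exp (- K * (r0 - r))"
    using assms by simp
  ultimately show ?thesis by linarith
qed

lemma abs_Re_mu_cross_le: "\<bar>Re (\<i> * mu r * cross r)\<bar> \<le> cmod (mu r) * cmod (cross r)"
  using abs_Re_le_cmod[of "\<i> * mu r * cross r"] by (simp add: norm_mult)

definition weight :: "real \<Rightarrow> real" where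
  "weight r = 2 * (r - \<rho>) / V r"

definition weight' :: "real \<Rightarrow> real" where
  "weight' r = 2 * (V r - (r - \<rho>) * (2 * \<omega> * r + e * Q)) / (V r)\<^sup>2"

definition energy :: "real \<Rightarrow> real" where
  "energy r = density r + weight r * Re (\<i> * mu r * cross r)"

lemma weight_deriv:
  assumes "V r \<noteq> 0"
  shows "(weight has_real_derivative weight' r) (at r)"
  using assms unfolding weight_def[abs_def] weight'_def radV_def
  by (auto intro!: derivative_eq_intros simp: power2_eq_square field_simps)

lemma weight_mult_alpha:
  assumes "\<rho> < r" "V r \<noteq> 0"
  shows "weight r * alpha r = 2"
  using assms by (simp add: weight_def alpha_def field_simps)

lemma density_deriv_cancel:
  assumes "\<rho> < r" "V r \<noteq> 0"
  shows "4 * Re (mu r * cross r) / (r - \<rho>) + weight r * Re (\<i> * mu r *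
      ((2 * \<i> * alpha r * cross r + cnj (mu r) * density r) / (r - \<rho>))) = 0"
proof -
  define p where "p = Re (mu r * cross r)"
  have "Re (\<i> * mu r * cnj (mu r) * density r) = 0"
    by (simp flip: complex_norm_square)
  then have "Re (\<i> * mu r * ((2 * \<i> * alpha r * cross r + cnj (mu r) * density r) / (r - \<rho>)))
      = - 2 * alpha r * p / (r - \<rho>)"
    unfolding p_def
    by (simp add: Re_divide_of_real algebra_simps diff_divide_distrib add_divide_distrib flip: of_real_diff)
  moreover have "weight r * (- 2 * alpha r * p / (r - \<rho>)) = - 2 * (weight r * alpha r) * p / (r - \<rho>)"
    by simp
  ultimately show ?thesis
    unfolding p_def[symmetric] weight_mult_alpha[OF assms] by simp
qed

lemma energy_deriv:
  assumes "\<rho> < r" "V r \<noteq> 0"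
  shows "(energy has_real_derivative
      weight' r * Re (\<i> * mu r * cross r) + weight r * m * Re (cross r)) (at r)"
proof -
  define dz where "dz = (2 * \<i> * alpha r * cross r + cnj (mu r) * density r) / (r - \<rho>)"
  have "(cross has_vector_derivative dz) (at r)"
    unfolding dz_def by (rule cross_deriv[OF assms(1)])
  then have "((\<lambda>s. \<i> * mu s * cross s) has_vector_derivative m * cross r + \<i> * mu r * dz) (at r)"
    using mu_deriv by (auto intro!: derivative_eq_intros simp: algebra_simps)
  then have "((\<lambda>s. Re (\<i> * mu s * cross s)) has_real_derivative Re (m * cross r + \<i> * mu r * dz)) (at r)"
    by (rule has_field_derivative_Re)
  then have "(energy has_real_derivative 4 * Re (mu r * cross r) / (r - \<rho>)
      + (weight' r * Re (\<i> * mu r * cross r) + Re (m * cross r + \<i> * mu r * dz) * weight r)) (at r)"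
    unfolding energy_def[abs_def] using density_deriv[OF assms(1)] weight_deriv[OF assms(2)]
    by (intro DERIV_add DERIV_mult)
  moreover have "Re (m * cross r + \<i> * mu r * dz) * weight r
      = weight r * m * Re (cross r) + weight r * Re (\<i> * mu r * dz)"
    by (simp add: algebra_simps)
  moreover have "4 * Re (mu r * cross r) / (r - \<rho>) + weight r * Re (\<i> * mu r * dz) = 0"
    unfolding dz_def by (rule density_deriv_cancel[OF assms])
  ultimately show ?thesis
    by (simp add: algebra_simps)
qed

lemma energy_comparable:
  assumes "\<bar>weight r\<bar> * cmod (mu r) \<le> 1"
  shows "density r / 2 \<le> energy r" and "energy r \<le> 3 * density r / 2"
proof -
  have "\<bar>weight r * Re (\<i> * mu r * cross r)\<bar> \<le> \<bar>weight r\<bar> * (cmod (mu r) * cmod (cross r))"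
    unfolding abs_mult by (rule mult_left_mono[OF abs_Re_mu_cross_le abs_ge_zero])
  also have "\<dots> = \<bar>weight r\<bar> * cmod (mu r) * cmod (cross r)"
    by (simp only: mult.assoc)
  also have "\<dots> \<le> cmod (cross r)"
    using assms mult_right_mono[OF assms norm_ge_zero] by simp
  finally have "\<bar>weight r * Re (\<i> * mu r * cross r)\<bar> \<le> density r / 2"
    using norm_cross_le[of r] by linarith
  then show "density r / 2 \<le> energy r" and "energy r \<le> 3 * density r / 2"
    unfolding energy_def by linarith+
qed

lemma near_horizon_bounds:
  assumes "V \<rho> \<noteq> 0"
  obtains \<eta> K where "0 < \<eta>" "0 \<le> K"
    and "\<And>s. \<rho> < s \<Longrightarrow> s < \<rho> + \<eta> \<Longrightarrow> V s \<noteq> 0 \<and> \<bar>weight s\<bar> * cmod (mu s) \<le> 1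
      \<and> \<bar>weight' s\<bar> * cmod (mu s) + \<bar>weight s\<bar> * \<bar>m\<bar> \<le> K"
proof -
  define c where "c s = \<bar>weight' s\<bar> * cmod (mu s) + \<bar>weight s\<bar> * \<bar>m\<bar>" for s
  have right_limit: "(g \<longlongrightarrow> g \<rho>) (at_right \<rho>)" if "isCont g \<rho>" for g :: "real \<Rightarrow> real"
    using that filterlim_at_split by (auto simp: isCont_def)
  have "isCont V \<rho>"
    unfolding radV_def[abs_def] by (intro continuous_intros)
  moreover have "isCont (\<lambda>s. \<bar>weight s\<bar> * cmod (mu s)) \<rho>" "isCont c \<rho>"
    using assms unfolding c_def weight_def[abs_def] weight'_def[abs_def] mu_def[abs_def] radV_def
    by (auto intro!: continuous_intros)
  ultimately have "\<forall>\<^sub>F s in at_right \<rho>. V s \<noteq> 0"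
    and "\<forall>\<^sub>F s in at_right \<rho>. \<bar>weight s\<bar> * cmod (mu s) < 1"
    and "\<forall>\<^sub>F s in at_right \<rho>. c s < c \<rho> + 1"
    using assms by (auto intro: tendsto_imp_eventually_ne order_tendstoD dest!: right_limit
        simp: weight_def)
  then have "\<forall>\<^sub>F s in at_right \<rho>. V s \<noteq> 0 \<and> \<bar>weight s\<bar> * cmod (mu s) \<le> 1 \<and> c s \<le> c \<rho> + 1"
    by eventually_elim auto
  then obtain b where "\<rho> < b"
    and b: "\<And>s. \<rho> < s \<Longrightarrow> s < b \<Longrightarrow> V s \<noteq> 0 \<and> \<bar>weight s\<bar> * cmod (mu s) \<le> 1 \<and> c s \<le> c \<rho> + 1"
    unfolding eventually_at_right_field by blast
  show ?thesis
  proof (rule that[of "b - \<rho>" "c \<rho> + 1"])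
    show "0 \<le> c \<rho> + 1"
      unfolding c_def by (simp add: add_nonneg_nonneg)
  qed (use \<open>\<rho> < b\<close> b in \<open>auto simp: c_def\<close>)
qed

lemma energy_deriv_le:
  assumes "\<bar>weight' s\<bar> * cmod (mu s) + \<bar>weight s\<bar> * \<bar>m\<bar> \<le> K"
  shows "weight' s * Re (\<i> * mu s * cross s) + weight s * m * Re (cross s) \<le> K * cmod (cross s)"
proof -
  have "weight' s * Re (\<i> * mu s * cross s) + weight s * m * Re (cross s)
      \<le> \<bar>weight' s\<bar> * \<bar>Re (\<i> * mu s * cross s)\<bar> + \<bar>weight s\<bar> * \<bar>m\<bar> * \<bar>Re (cross s)\<bar>"
    by (metis abs_ge_self abs_mult add_mono)
  also have "\<dots> \<le> \<bar>weight' s\<bar> * (cmod (mu s) * cmod (cross s)) + \<bar>weight s\<bar> * \<bar>m\<bar> * cmod (cross s)"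
    using abs_Re_mu_cross_le[of s] abs_Re_le_cmod[of "cross s"]
    by (intro add_mono mult_left_mono) auto
  also have "\<dots> = (\<bar>weight' s\<bar> * cmod (mu s) + \<bar>weight s\<bar> * \<bar>m\<bar>) * cmod (cross s)"
    by (simp add: algebra_simps)
  also have "\<dots> \<le> K * cmod (cross s)"
    using assms by (rule mult_right_mono) simp
  finally show ?thesis .
qed

lemma density_bounded_below:
  assumes "V \<rho> \<noteq> 0" "\<rho> < r0" "0 < density r0"
  obtains \<delta> r1 where "0 < \<delta>" "\<rho> < r1" "\<And>s. \<rho> < s \<Longrightarrow> s \<le> r1 \<Longrightarrow> \<delta> \<le> density s"
proof -
  obtain \<eta> K where "0 < \<eta>" "0 \<le> K" and near: "\<And>s. \<rho> < s \<Longrightarrow> s < \<rho> + \<eta> \<Longrightarrow>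
      V s \<noteq> 0 \<and> \<bar>weight s\<bar> * cmod (mu s) \<le> 1 \<and> \<bar>weight' s\<bar> * cmod (mu s) + \<bar>weight s\<bar> * \<bar>m\<bar> \<le> K"
    using near_horizon_bounds[OF assms(1)] by blast
  define r1 where "r1 = min r0 (\<rho> + \<eta> / 2)"
  have r1: "\<rho> < r1" "r1 \<le> r0" "r1 < \<rho> + \<eta>"
    unfolding r1_def using assms \<open>0 < \<eta>\<close> by auto
  have "0 < energy r1"
    using density_pos_left[OF r1(1,2) assms(3)] energy_comparable(1)[of r1] near[OF r1(1,3)] by linarith
  define \<delta> where "\<delta> = 2 / 3 * (energy r1 * exp (- K * \<eta>))"
  show ?thesis
  proof (rule that[of \<delta> r1])
    show "0 < \<delta>"
      unfolding \<delta>_def using \<open>0 < energy r1\<close> by simp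
    show "\<rho> < r1"
      by (rule r1(1))
    fix s assume s: "\<rho> < s" "s \<le> r1"
    have "energy r1 * exp (- K * (r1 - s)) \<le> energy s"
    proof (rule gronwall_backward[OF \<open>s \<le> r1\<close>])
      fix t assume "t \<in> {s..r1}"
      then have t: "\<rho> < t" "t < \<rho> + \<eta>"
        using s r1 by auto
      show "(energy has_real_derivative
          weight' t * Re (\<i> * mu t * cross t) + weight t * m * Re (cross t)) (at t)"
        using energy_deriv[OF t(1)] near[OF t] by blast
      have "weight' t * Re (\<i> * mu t * cross t) + weight t * m * Re (cross t) \<le> K * cmod (cross t)"
        using near[OF t] by (intro energy_deriv_le) blast
      also have "\<dots> \<le> K * energy t"
        using norm_cross_le[of t] energy_comparable(1)[of t] near[OF t] \<open>0 \<le> K\<close>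
        by (intro mult_left_mono) auto
      finally show "weight' t * Re (\<i> * mu t * cross t) + weight t * m * Re (cross t) \<le> K * energy t" .
    qed
    moreover have "energy r1 * exp (- K * \<eta>) \<le> energy r1 * exp (- K * (r1 - s))"
      using s r1 \<open>0 \<le> K\<close> \<open>0 < energy r1\<close> by (auto intro!: mult_left_mono)
    moreover have "energy s \<le> 3 * density s / 2"
      using energy_comparable(2)[of s] near s r1 by auto
    ultimately show "\<delta> \<le> density s"
      unfolding \<delta>_def by linarith
  qed
qed

lemma radV_horizon_eq_0:
  assumes "0 < \<rho>" "\<rho> < r0" "f1 r0 \<noteq> 0 \<or> f2 r0 \<noteq> 0"
    and integrable: "set_integrable lborel {\<rho><..} (\<lambda>r. density r * (r\<^sup>2 + a\<^sup>2) / (r - \<rho>)\<^sup>2)"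
  shows "V \<rho> = 0"
proof (rule ccontr)
  assume "V \<rho> \<noteq> 0"
  moreover have "0 < density r0"
    using assms(3) by (auto simp: density_def add_pos_nonneg add_nonneg_pos)
  ultimately obtain \<delta> r1 where "0 < \<delta>" "\<rho> < r1" and below: "\<And>s. \<rho> < s \<Longrightarrow> s \<le> r1 \<Longrightarrow> \<delta> \<le> density s"
    using density_bounded_below \<open>\<rho> < r0\<close> by blast
  have "\<delta> * \<rho>\<^sup>2 / (r - \<rho>)\<^sup>2 \<le> density r * (r\<^sup>2 + a\<^sup>2) / (r - \<rho>)\<^sup>2" if "\<rho> < r" "r \<le> r1" for r
  proof (intro divide_right_mono mult_mono)
    show "\<rho>\<^sup>2 \<le> r\<^sup>2 + a\<^sup>2"
      using power_strict_mono[OF \<open>\<rho> < r\<close>, of 2] \<open>0 < \<rho>\<close> by (simp add: add_increasing2)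
  qed (use below that \<open>0 < \<delta>\<close> density_nonneg in auto)
  with not_set_integrable_inverse_square[of "\<delta> * \<rho>\<^sup>2"] \<open>0 < \<delta>\<close> \<open>0 < \<rho>\<close> \<open>\<rho> < r1\<close> integrable
  show False by simp
qed

end

theorem mainTheorem4:
  fixes M a Q m e k \<omega> :: real
  assumes "M > 0" and "M^2 = a^2 + Q^2"
    and "m > 0" and "half_integer k"
    and "energy_eigenvalue M a Q m e k \<omega>"
  shows "\<omega> = - (k * a + e * Q * M) / (a^2 + M^2)"
proof -
  obtain lam f1 f2 r0 where radial: "radial_system M a Q m e k \<omega> lam f1 f2"
    and r0: "M < r0" "f1 r0 \<noteq> 0 \<or> f2 r0 \<noteq> 0"
    and integrable: "set_integrable lborel {M<..}
      (\<lambda>r. ((cmod (f1 r))\<^sup>2 + (cmod (f2 r))\<^sup>2) * (r\<^sup>2 + a\<^sup>2) / (r - M)\<^sup>2)"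
    using assms(5) unfolding energy_eigenvalue_def radial_system_def by blast
  interpret radial_system M a Q m e k \<omega> lam f1 f2
    by (fact radial)
  have "radV a Q e k \<omega> M = 0"
    using radV_horizon_eq_0[OF \<open>M > 0\<close> r0] integrable by (simp add: density_def)
  moreover have "a\<^sup>2 + M\<^sup>2 \<noteq> 0"
    using \<open>M > 0\<close> by (simp add: add_nonneg_pos)
  ultimately show ?thesis
    by (simp add: radV_def field_simps)
qed

end
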